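(* Let $T,\varepsilon,\eta>0$ and $0\le a\le b<\infty$. Suppose that (AA) holds. Then $\liminf_{n\to\infty}\mathbb{P}\Big(\max_{1\le k\le K}\sup_{0\le s\le t\le T}\big|\bar{\mathcal{G}}^n_k(s,t)((a,b))-\mathcal{D}^*_k(s,t)((a,b))\big|\le\varepsilon\Big)\ge1-\eta$.
   Context: Fix $K\in\mathbb{N}$. For each $1\le k\le K$, $E_k(\cdot)$ is a renewal process with rate $\lambda_k\in(0,\infty)$ and strictly positive interarrival times, and $E^n_k(t)=E_k(nt)$. $\Gamma_k$ is a continuous probability distribution on $(0,\infty)$ with finite mean. Assumption (AA): for each $n\in\mathbb{N}$ there are $K$ independent sequences $\{g^n_{k,i}\}_{i\in\mathbb{N}}$, $1\le k\le K$, each of strictly positive i.i.d. random variables, independent of the arrival processes, with $g^n_{k,1}$ having distribution $\Gamma^n_k$ of finite mean (not necessarily continuous), such that $\lim_{M\to\infty}\sup_n\int_{(M,\infty)}x\,\Gamma^n_k(dx)=0$ and $\Gamma^n_k\to\Gamma_k$ weakly as $n\to\infty$, for each $k$. For $x\in\mathbb{R}_+$, $\delta^+_x$ is the unit mass at $x$ if $x>0$ and zero otherwise. Define $\bar{\mathcal{G}}^n_k(t)=\frac1n\sum_{i=1}^{E^n_k(t)}\delta^+_{g^n_{k,i}}$, $\mathcal{D}^*_k(t)=\lambda_kt\,\Gamma_k$, and for $0\le s\le t$, $\bar{\mathcal{G}}^n_k(s,t)=\bar{\mathcal{G}}^n_k(t)-\bar{\mathcal{G}}^n_k(s)$, $\mathcal{D}^*_k(s,t)=\mathcal{D}^*_k(t)-\mathcal{D}^*_k(s)$.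 *)

theory Defs
  imports "HOL-Probability.Probability"
begin

definition renewal_count :: "(nat \<Rightarrow> real) \<Rightarrow> real \<Rightarrow> nat" where
  "renewal_count u t = card {m. 1 \<le> m \<and> (\<Sum>i<m. u i) \<le> t}"

definition deltap :: "real \<Rightarrow> real set \<Rightarrow> real" where
  "deltap x A = (if 0 < x \<and> x \<in> A then 1 else 0)"

text \<open>(1/n) sum_{i < m} deltap (g i), evaluated at A (0-based indexing of the g's).\<close>
definition Gbar :: "nat \<Rightarrow> (nat \<Rightarrow> real) \<Rightarrow> nat \<Rightarrow> real set \<Rightarrow> real" where
  "Gbar n g m A = (1 / real n) * (\<Sum>i<m. deltap (g i) A)"

end

theory Submission
  imports Defs "HOL-Real_Asymp.Real_Asymp"
begin

text \<open>Fix a class k, write N(t) = E(nt) for the renewal count and X_i = \<delta>+(g_i)((a,b)), a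
  {0,1}-valued variable with mean p_n = \<Gamma>^n((a,b)); weak convergence and the continuity of \<Gamma>
  give p_n \<rightarrow> p = \<Gamma>((a,b)). Outside an event of small probability, Hoeffding's inequality
  makes the partial sums of the interarrival times and of the X_i uniformly close, up to the
  linear horizon m \<le> Cn, to m/\<lambda> and m p_n respectively. The former pins N(t) down to
  \<lambda>nt up to \<epsilon>n uniformly on [0,T], and then (1/n)(X_0 + ... + X_(N(t)-1)) is within \<epsilon> of
  \<lambda>tp. Interarrival times are unbounded, so Hoeffding is applied to their truncations and
  the remainder, of small mean, is handled by Markov's inequality. A union bound over the
  K classes concludes. The supremum over s \<le> t defines an event
  because the paths are right-locally constant, so it may be taken over rational times.\<close>

definition right_locally_const :: "(real \<Rightarrow> 'b) \<Rightarrow> bool" where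
  "right_locally_const f \<longleftrightarrow> (\<forall>x. \<exists>d>0. \<forall>y. x \<le> y \<longrightarrow> y < x + d \<longrightarrow> f y = f x)"

lemma right_locally_const_comp:
  "right_locally_const f \<Longrightarrow> right_locally_const (\<lambda>x. h (f x))"
  unfolding right_locally_const_def by metis

lemma right_locally_const_scale:
  assumes f: "right_locally_const f" and c: "c \<ge> 0"
  shows "right_locally_const (\<lambda>x. f (c * x))"
  unfolding right_locally_const_def
proof
  fix x
  obtain d where d: "d > 0" "\<And>y. c * x \<le> y \<Longrightarrow> y < c * x + d \<Longrightarrow> f y = f (c * x)"
    using f unfolding right_locally_const_def by blast
  show "\<exists>d'>0. \<forall>y. x \<le> y \<longrightarrow> y < x + d' \<longrightarrow> f (c * y) = f (c * x)"
  proof (intro exI[of _ "d / (c + 1)"] conjI allI impI)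
    fix y assume y: "x \<le> y" "y < x + d / (c + 1)"
    have "c * (y - x) \<le> (c + 1) * (y - x)" using y by (intro mult_right_mono) auto
    also have "\<dots> < d" using y c by (simp add: field_simps)
    finally show "f (c * y) = f (c * x)"
      using y c by (intro d(2)) (auto simp: algebra_simps intro: mult_left_mono)
  qed (use d c in auto)
qed

lemma right_locally_const_renewal_count:
  fixes u :: "nat \<Rightarrow> real"
  assumes u: "\<And>i. u i \<ge> 0"
  shows "right_locally_const (renewal_count u)"
  unfolding right_locally_const_def
proof
  fix x
  define S where "S m = (\<Sum>i<m. u i)" for m
  have S_mono: "S m \<le> S m'" if "m \<le> m'" for m m'
    unfolding S_def using that u by (intro sum_mono2) auto
  have count: "renewal_count u y = card {m. 1 \<le> m \<and> S m \<le> y}" for y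
    unfolding renewal_count_def S_def ..
  show "\<exists>d>0. \<forall>y. x \<le> y \<longrightarrow> y < x + d \<longrightarrow> renewal_count u y = renewal_count u x"
  proof (cases "\<exists>m. 1 \<le> m \<and> x < S m")
    case False
    then have "S m \<le> x" if "1 \<le> m" for m
      using that by (simp add: not_less)
    then have "{m. 1 \<le> m \<and> S m \<le> y} = {1..}" if "x \<le> y" for y
      using that by (auto intro: order_trans)
    then have "renewal_count u y = renewal_count u x" if "x \<le> y" for y
      using that unfolding count by simp
    then show ?thesis using zero_less_one by blast
  next
    case True
    define m0 where "m0 = (LEAST m. 1 \<le> m \<and> x < S m)"
    have m0: "1 \<le> m0" "x < S m0"
      using LeastI_ex[OF True] unfolding m0_def by auto
    have same: "{m. 1 \<le> m \<and> S m \<le> y} = {m. 1 \<le> m \<and> S m \<le> x}" if y: "x \<le> y" "y < S m0" for y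
    proof (intro Collect_cong iffI conjI)
      fix m assume m: "1 \<le> m \<and> S m \<le> y"
      then have "m < m0" using S_mono[of m0 m] y by (cases "m0 \<le> m") auto
      then have "\<not> (1 \<le> m \<and> x < S m)" unfolding m0_def by (rule not_less_Least)
      then show "S m \<le> x" using m by simp
    qed (use y in auto)
    have "renewal_count u y = renewal_count u x" if "x \<le> y" "y < x + (S m0 - x)" for y
      using same[of y] that unfolding count by simp
    moreover have "0 < S m0 - x" using m0 by simp
    ultimately show ?thesis by blast
  qed
qed

text \<open>Moving s and t slightly to the right onto the grid leaves the path unchanged and
  perturbs the linear drift arbitrarily little.\<close>

lemma increment_bound_from_grid:
  fixes phi :: "real \<Rightarrow> real"
  assumes rlc: "right_locally_const phi"
    and grid: "\<forall>s\<in>insert T \<rat> \<inter> {0..T}. \<forall>t\<in>insert T \<rat> \<inter> {0..T}. s \<le> t \<longrightarrow>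
              \<bar>(phi t - phi s) - (l * t - l * s) * p\<bar> \<le> e"
    and st: "0 \<le> s" "s \<le> t" "t \<le> T"
  shows "\<bar>(phi t - phi s) - (l * t - l * s) * p\<bar> \<le> e"
proof (rule ccontr)
  define D where "D = insert T \<rat> \<inter> {0..T}"
  define F where "F x y = (phi y - phi x) - (l * y - l * x) * p" for x y
  assume "\<not> ?thesis"
  then have gap: "\<bar>F s t\<bar> > e" unfolding F_def by simp
  define \<eta> where "\<eta> = (\<bar>F s t\<bar> - e) / (2 * (\<bar>l * p\<bar> + 1))"
  have \<eta>: "\<eta> > 0" "\<bar>l * p\<bar> * (2 * \<eta>) < \<bar>F s t\<bar> - e"
    using gap unfolding \<eta>_def by (auto simp: field_simps)
  have snap: "\<exists>r\<in>D. z \<le> r \<and> r \<le> z + \<eta> \<and> r \<le> w \<and> phi r = phi z"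
    if z: "0 \<le> z" "z \<le> w" "w \<in> D" for z w
  proof (cases "z = w")
    case True then show ?thesis using z \<eta> by auto
  next
    case False
    obtain d where d: "d > 0" "\<forall>y. z \<le> y \<longrightarrow> y < z + d \<longrightarrow> phi y = phi z"
      using rlc unfolding right_locally_const_def by blast
    have "z < min (min (z + d) (z + \<eta>)) w" using False z d \<eta> by simp
    then obtain r where r: "r \<in> \<rat>" "z < r" "r < min (min (z + d) (z + \<eta>)) w"
      using Rats_dense_in_real by blast
    moreover have "phi r = phi z"
      using d(2) r by (meson less_imp_le min_less_iff_conj)
    ultimately show ?thesis using z by (intro bexI[of _ r]) (auto simp: D_def)
  qed
  have "T \<in> D" using st unfolding D_def by simp
  then obtain t' where t': "t' \<in> D" "t \<le> t'" "t' \<le> t + \<eta>" "phi t' = phi t"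
    using snap[of t T] st by auto
  obtain s' where s': "s' \<in> D" "s \<le> s'" "s' \<le> s + \<eta>" "s' \<le> t'" "phi s' = phi s"
    using snap[of s t'] st t' by auto
  have grid_st: "\<bar>F s' t'\<bar> \<le> e" using grid s' t' unfolding F_def D_def by blast
  have "F s' t' - F s t = (l * p) * ((s' - s) - (t' - t))"
    unfolding F_def using s'(5) t'(4) by (simp add: algebra_simps)
  then have "\<bar>F s' t' - F s t\<bar> = \<bar>l * p\<bar> * \<bar>(s' - s) - (t' - t)\<bar>"
    by (simp add: abs_mult)
  also have "\<dots> \<le> \<bar>l * p\<bar> * (2 * \<eta>)"
    using s'(2,3) t'(2,3) by (intro mult_left_mono) auto
  finally have "\<bar>F s' t' - F s t\<bar> \<le> \<bar>l * p\<bar> * (2 * \<eta>)" .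
  then show False using grid_st \<eta> by linarith
qed

lemma sets_Collect_increment_bound:
  fixes phi :: "'a \<Rightarrow> real \<Rightarrow> real"
  assumes rlc: "\<And>w. w \<in> space M \<Longrightarrow> right_locally_const (phi w)"
    and [measurable]: "\<And>x. (\<lambda>w. phi w x) \<in> borel_measurable M"
  shows "{w\<in>space M. \<forall>s t. 0 \<le> s \<longrightarrow> s \<le> t \<longrightarrow> t \<le> T \<longrightarrow>
           \<bar>(phi w t - phi w s) - (l * t - l * s) * p\<bar> \<le> e} \<in> sets M"
proof -
  define D where "D = insert T \<rat> \<inter> {0..T}"
  have D: "countable D" unfolding D_def by (rule countable_Int1) (simp add: countable_rat)
  have "(\<forall>s t. 0 \<le> s \<longrightarrow> s \<le> t \<longrightarrow> t \<le> T \<longrightarrow> \<bar>(phi w t - phi w s) - (l * t - l * s) * p\<bar> \<le> e) \<longleftrightarrow>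
        (\<forall>s\<in>D. \<forall>t\<in>D. s \<le> t \<longrightarrow> \<bar>(phi w t - phi w s) - (l * t - l * s) * p\<bar> \<le> e)"
    if w: "w \<in> space M" for w
  proof
    assume "\<forall>s t. 0 \<le> s \<longrightarrow> s \<le> t \<longrightarrow> t \<le> T \<longrightarrow> \<bar>(phi w t - phi w s) - (l * t - l * s) * p\<bar> \<le> e"
    then show "\<forall>s\<in>D. \<forall>t\<in>D. s \<le> t \<longrightarrow> \<bar>(phi w t - phi w s) - (l * t - l * s) * p\<bar> \<le> e"
      unfolding D_def by simp
  next
    assume "\<forall>s\<in>D. \<forall>t\<in>D. s \<le> t \<longrightarrow> \<bar>(phi w t - phi w s) - (l * t - l * s) * p\<bar> \<le> e"
    then show "\<forall>s t. 0 \<le> s \<longrightarrow> s \<le> t \<longrightarrow> t \<le> T \<longrightarrow> \<bar>(phi w t - phi w s) - (l * t - l * s) * p\<bar> \<le> e"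
      unfolding D_def using increment_bound_from_grid[OF rlc[OF w]] by blast
  qed
  then have "{w\<in>space M. \<forall>s t. 0 \<le> s \<longrightarrow> s \<le> t \<longrightarrow> t \<le> T \<longrightarrow>
           \<bar>(phi w t - phi w s) - (l * t - l * s) * p\<bar> \<le> e} =
        {w\<in>space M. \<forall>s\<in>D. \<forall>t\<in>D. s \<le> t \<longrightarrow> \<bar>(phi w t - phi w s) - (l * t - l * s) * p\<bar> \<le> e}"
    by (intro Collect_cong) blast
  also have "\<dots> \<in> sets M"
    by (intro sets.sets_Collect_countable_All' D) measurable
  finally show ?thesis .
qed

lemma (in prob_space) prob_max_partial_sum_deviation_le:
  fixes Y :: "nat \<Rightarrow> 'a \<Rightarrow> real"
  assumes indep: "indep_vars (\<lambda>_. borel) Y UNIV"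
    and ident: "\<And>i. distr M borel (Y i) = distr M borel (Y 0)"
    and bnd: "\<And>i x. x \<in> space M \<Longrightarrow> Y i x \<in> {0..c}"
    and c: "c > 0" and \<delta>: "\<delta> > 0"
  shows "prob {x\<in>space M. \<exists>m\<le>N. \<delta> \<le> \<bar>(\<Sum>i<m. Y i x) - real m * expectation (Y 0)\<bar>}
          \<le> 2 * real N * exp (-2 * \<delta>\<^sup>2 / (real N * c\<^sup>2))"
proof -
  have [measurable]: "Y i \<in> borel_measurable M" for i
    using indep unfolding indep_vars_def by auto
  define A where "A m = {x\<in>space M. \<delta> \<le> \<bar>(\<Sum>i<m. Y i x) - real m * expectation (Y 0)\<bar>}" for m
  have A_sets: "A m \<in> events" for m unfolding A_def by measurable
  have "{x\<in>space M. \<exists>m\<le>N. \<delta> \<le> \<bar>(\<Sum>i<m. Y i x) - real m * expectation (Y 0)\<bar>} \<subseteq> (\<Union>m\<in>{1..N}. A m)"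
  proof
    fix x assume "x \<in> {x\<in>space M. \<exists>m\<le>N. \<delta> \<le> \<bar>(\<Sum>i<m. Y i x) - real m * expectation (Y 0)\<bar>}"
    then obtain m where x: "x \<in> space M" "m \<le> N"
      and dev: "\<delta> \<le> \<bar>(\<Sum>i<m. Y i x) - real m * expectation (Y 0)\<bar>" by blast
    have "m \<noteq> 0" using dev \<delta> by (cases "m = 0") auto
    then show "x \<in> (\<Union>m\<in>{1..N}. A m)" using x dev unfolding A_def by auto
  qed
  then have "prob {x\<in>space M. \<exists>m\<le>N. \<delta> \<le> \<bar>(\<Sum>i<m. Y i x) - real m * expectation (Y 0)\<bar>}
      \<le> prob (\<Union>m\<in>{1..N}. A m)"
    by (rule finite_measure_mono) (use A_sets in auto)
  also have "\<dots> \<le> (\<Sum>m\<in>{1..N}. prob (A m))"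
    by (rule measure_UNION_le) (use A_sets in auto)
  also have "\<dots> \<le> (\<Sum>m\<in>{1..N}. 2 * exp (-2 * \<delta>\<^sup>2 / (real N * c\<^sup>2)))"
  proof (rule sum_mono)
    fix m assume m: "m \<in> {1..N}"
    interpret Hoeffding_ineq_iid M "{..<m}" Y "Y 0" 0 c "expectation (Y 0)"
    proof unfold_locales
      show "indep_vars (\<lambda>_. borel) Y {..<m}" by (rule indep_vars_subset[OF indep]) auto
      show "AE x in M. Y 0 x \<in> {0..c}" using bnd by auto
    qed (use ident in auto)
    have "prob {x\<in>space M. \<delta> \<le> \<bar>(\<Sum>i\<in>{..<m}. Y i x) - real (card {..<m}) * expectation (Y 0)\<bar>}
        \<le> 2 * exp (-2 * \<delta>\<^sup>2 / (real (card {..<m}) * (c - 0)\<^sup>2))"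
      by (rule Hoeffding_ineq_abs_ge) (use \<delta> c m in \<open>auto simp: lessThan_empty_iff\<close>)
    then have "prob (A m) \<le> 2 * exp (-2 * \<delta>\<^sup>2 / (real m * c\<^sup>2))"
      unfolding A_def by simp
    moreover have "-2 * \<delta>\<^sup>2 / (real m * c\<^sup>2) \<le> -2 * \<delta>\<^sup>2 / (real N * c\<^sup>2)"
      using m c \<delta> by (intro divide_left_mono_neg mult_right_mono mult_pos_pos) auto
    ultimately show "prob (A m) \<le> 2 * exp (-2 * \<delta>\<^sup>2 / (real N * c\<^sup>2))"
      by (smt (verit) exp_le_cancel_iff)
  qed
  finally show ?thesis by simp
qed

lemma (in prob_space) eventually_prob_max_partial_sum_deviation_less:
  fixes Y :: "nat \<Rightarrow> nat \<Rightarrow> 'a \<Rightarrow> real" and C :: nat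
  assumes indep: "\<And>n. indep_vars (\<lambda>_. borel) (Y n) UNIV"
    and ident: "\<And>n i. distr M borel (Y n i) = distr M borel (Y n 0)"
    and bnd: "\<And>n i x. x \<in> space M \<Longrightarrow> Y n i x \<in> {0..c}"
    and c: "c > 0" and C: "C > 0" and \<delta>: "\<delta> > 0" and d: "d > 0"
  shows "\<forall>\<^sub>F n in sequentially. prob {x\<in>space M. \<exists>m\<le>C * n.
           \<delta> * real n \<le> \<bar>(\<Sum>i<m. Y n i x) - real m * expectation (Y n 0)\<bar>} < d"
proof -
  have "(\<lambda>n. 2 * real (C * n) * exp (-2 * (\<delta> * real n)\<^sup>2 / (real (C * n) * c\<^sup>2))) \<longlonglongrightarrow> 0"
    using C c \<delta> by real_asymp
  then have "\<forall>\<^sub>F n in sequentially. 2 * real (C * n) * exp (-2 * (\<delta> * real n)\<^sup>2 / (real (C * n) * c\<^sup>2)) < d"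
    using d by (intro order_tendstoD(2)) auto
  then show ?thesis
    using eventually_gt_at_top[of 0]
    by eventually_elim
      (rule le_less_trans[OF prob_max_partial_sum_deviation_le[OF indep ident bnd c]]; simp add: \<delta>)
qed

lemma (in prob_space) exists_truncation_level:
  fixes U :: "'a \<Rightarrow> real"
  assumes int: "integrable M U" and \<beta>: "\<beta> > 0"
  shows "\<exists>c>0. expectation U - expectation (\<lambda>w. min (U w) c) \<le> \<beta>"
proof -
  have [measurable]: "U \<in> borel_measurable M" using int by (rule borel_measurable_integrable)
  have "(\<lambda>j::nat. expectation (\<lambda>w. min (U w) (real j))) \<longlonglongrightarrow> expectation U"
  proof (rule integral_dominated_convergence[where w="\<lambda>w. norm (U w)"])
    show "integrable M (\<lambda>w. norm (U w))" using int by simp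
    show "AE w in M. norm (min (U w) (real j)) \<le> norm (U w)" for j
      by (intro AE_I2) auto
    show "AE w in M. (\<lambda>j. min (U w) (real j)) \<longlonglongrightarrow> U w"
    proof (rule AE_I2)
      fix w
      have "\<forall>\<^sub>F j in sequentially. min (U w) (real j) = U w"
        using eventually_ge_at_top[of "nat \<lceil>U w\<rceil>"]
        by eventually_elim (simp add: nat_ceiling_le_eq min_def)
      then show "(\<lambda>j. min (U w) (real j)) \<longlonglongrightarrow> U w" by (rule tendsto_eventually)
    qed
  qed auto
  then have "\<forall>\<^sub>F j in sequentially. dist (expectation (\<lambda>w. min (U w) (real j))) (expectation U) < \<beta>"
    using \<beta> by (rule tendstoD)
  then have "\<forall>\<^sub>F j in sequentially. 1 \<le> j \<and>
      dist (expectation (\<lambda>w. min (U w) (real j))) (expectation U) < \<beta>"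
    using eventually_ge_at_top[of 1] by eventually_elim simp
  then obtain j :: nat where "j \<ge> 1" "dist (expectation (\<lambda>w. min (U w) (real j))) (expectation U) < \<beta>"
    using eventually_happens'[OF trivial_limit_sequentially] by blast
  then show ?thesis by (intro exI[of _ "real j"]) (auto simp: dist_real_def)
qed

lemma (in prob_space) distr_compose_eq:
  assumes X: "X \<in> borel_measurable M" "Y \<in> borel_measurable M"
    and eq: "distr M borel X = distr M borel Y" and f: "f \<in> borel_measurable borel"
  shows "distr M borel (\<lambda>w. f (X w)) = distr M borel (\<lambda>w. f (Y w))"
  using distr_distr[OF f X(1)] distr_distr[OF f X(2)] eq by (simp add: comp_def)

lemma (in prob_space) integral_compose_eq:
  fixes f :: "real \<Rightarrow> real"
  assumes X: "X \<in> borel_measurable M" "Y \<in> borel_measurable M"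
    and eq: "distr M borel X = distr M borel Y" and f: "f \<in> borel_measurable borel"
  shows "expectation (\<lambda>w. f (X w)) = expectation (\<lambda>w. f (Y w))"
  using integral_distr[OF X(1) f] integral_distr[OF X(2) f] eq by simp

lemma (in prob_space) integrable_of_distr_eq:
  assumes X: "X \<in> borel_measurable M" "Y \<in> borel_measurable M"
    and eq: "distr M borel X = distr M borel Y" and int: "integrable M Y"
  shows "integrable M (X :: 'a \<Rightarrow> real)"
proof -
  have "integrable (distr M borel Y) (\<lambda>x. x)" using int X by (subst integrable_distr_eq) auto
  then have "integrable (distr M borel X) (\<lambda>x. x)" using eq by simp
  then show ?thesis using X by (subst (asm) integrable_distr_eq) auto
qed

lemma (in prob_space) prob_partial_sum_ge_le:
  fixes r :: "nat \<Rightarrow> 'a \<Rightarrow> real"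
  assumes int: "\<And>i. integrable M (r i)" and nonneg: "\<And>i w. w \<in> space M \<Longrightarrow> 0 \<le> r i w"
    and mean: "\<And>i. expectation (r i) = \<mu>" and \<delta>: "\<delta> > 0"
  shows "prob {w\<in>space M. \<delta> \<le> (\<Sum>i<N. r i w)} \<le> real N * \<mu> / \<delta>"
proof -
  have "prob {w\<in>space M. \<delta> \<le> (\<Sum>i<N. r i w)} \<le> expectation (\<lambda>w. \<Sum>i<N. r i w) / \<delta>"
    using int nonneg \<delta>
    by (intro integral_Markov_inequality_measure[where A="space M"] AE_I2 sum_nonneg) auto
  also have "expectation (\<lambda>w. \<Sum>i<N. r i w) = real N * \<mu>"
    using int by (simp add: mean Bochner_Integration.integral_sum)
  finally show ?thesis .
qed

lemma partial_sum_deviation_truncation: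
  fixes u v :: "nat \<Rightarrow> real"
  assumes le: "\<And>i. v i \<le> u i" and m: "m \<le> N" and ec: "0 \<le> ec" "real m * ec \<le> \<delta>"
    and v_close: "\<bar>(\<Sum>i<m. v i) - real m * \<mu>\<bar> < \<delta>" and rest: "(\<Sum>i<N. u i - v i) < \<delta>"
  shows "\<bar>(\<Sum>i<m. u i) - real m * (\<mu> + ec)\<bar> \<le> 3 * \<delta>"
proof -
  have "0 \<le> (\<Sum>i<m. u i - v i)" "(\<Sum>i<m. u i - v i) \<le> (\<Sum>i<N. u i - v i)"
    using m le by (auto intro!: sum_nonneg sum_mono2)
  moreover have "0 \<le> real m * ec" using ec(1) by simp
  moreover have "(\<Sum>i<m. u i) - real m * (\<mu> + ec) =
      ((\<Sum>i<m. v i) - real m * \<mu>) + (\<Sum>i<m. u i - v i) - real m * ec"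
    by (simp add: sum_subtractf algebra_simps)
  ultimately show ?thesis
    using v_close rest ec(2) by (simp only: abs_le_iff abs_less_iff) (intro conjI; linarith)
qed

text \<open>Truncating at level c splits u_i into a bounded part, controlled by Hoeffding's inequality,
  and a nonnegative remainder of small mean, controlled by Markov's inequality.\<close>

lemma (in prob_space) eventually_uniform_partial_sums_close:
  fixes u :: "nat \<Rightarrow> 'a \<Rightarrow> real" and C :: nat
  assumes indep: "indep_vars (\<lambda>_. borel) u UNIV"
    and ident: "\<And>i. distr M borel (u i) = distr M borel (u 0)"
    and nonneg: "\<And>i w. w \<in> space M \<Longrightarrow> 0 \<le> u i w"
    and int: "integrable M (u 0)"
    and C: "C > 0" and ep: "ep > 0" and d: "d > 0"
  shows "\<forall>\<^sub>F n in sequentially. \<exists>B\<in>events. prob B \<le> d \<and>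
           (\<forall>w\<in>space M - B. \<forall>m\<le>C * n.
              \<bar>(\<Sum>i<m. u i w) - real m * expectation (u 0)\<bar> \<le> ep * real n)"
proof -
  have u_meas[measurable]: "u i \<in> borel_measurable M" for i
    using indep unfolding indep_vars_def by auto
  define \<beta> where "\<beta> = min (ep / (3 * real C)) (ep * d / (6 * real C))"
  have \<beta>: "\<beta> > 0" unfolding \<beta>_def using ep d C by auto
  obtain c where c: "c > 0" and trunc: "expectation (u 0) - expectation (\<lambda>w. min (u 0 w) c) \<le> \<beta>"
    using exists_truncation_level[OF int \<beta>] by blast
  define v where "v i w = min (u i w) c" for i w
  define ec where "ec = expectation (u 0) - expectation (v 0)"
  have [measurable]: "v i \<in> borel_measurable M" for i unfolding v_def by measurable
  have v_bnd: "v i w \<in> {0..c}" if "w \<in> space M" for i w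
    using nonneg[OF that, of i] c unfolding v_def by auto
  have u_int: "integrable M (u i)" for i
    by (rule integrable_of_distr_eq[OF u_meas u_meas ident int])
  have v_int: "integrable M (v i)" for i
    using v_bnd by (intro integrable_const_bound[where B=c] AE_I2) auto
  have rest_exp: "expectation (\<lambda>w. u i w - v i w) = ec" for i
  proof -
    have "expectation (\<lambda>w. u i w - v i w) = expectation (\<lambda>w. u 0 w - v 0 w)"
      unfolding v_def by (rule integral_compose_eq[OF u_meas u_meas ident]) measurable
    then show ?thesis unfolding ec_def using u_int v_int by simp
  qed
  have ec: "0 \<le> ec" "real C * ec \<le> ep / 3" "real C * ec \<le> ep * d / 6"
  proof -
    show "0 \<le> ec" unfolding ec_def v_def using u_int v_int[of 0] by (simp add: integral_mono v_def)
    have "real C * ec \<le> real C * \<beta>" using trunc C unfolding ec_def v_def by (intro mult_left_mono) auto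
    then show "real C * ec \<le> ep / 3" "real C * ec \<le> ep * d / 6"
      using C unfolding \<beta>_def by (auto simp: field_simps min_le_iff_disj)
  qed
  define V where "V n = {w\<in>space M. \<exists>m\<le>C * n.
                   ep / 3 * real n \<le> \<bar>(\<Sum>i<m. v i w) - real m * expectation (v 0)\<bar>}" for n
  define W where "W n = {w\<in>space M. ep / 3 * real n \<le> (\<Sum>i<C * n. u i w - v i w)}" for n
  have V_W_sets: "V n \<in> events" "W n \<in> events" for n unfolding V_def W_def by measurable
  have v_indep: "indep_vars (\<lambda>_. borel) v UNIV"
    unfolding v_def by (rule indep_vars_compose2[OF indep]) measurable
  have v_ident: "distr M borel (v i) = distr M borel (v 0)" for i
    unfolding v_def by (rule distr_compose_eq[OF u_meas u_meas ident]) measurable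
  have V_small: "\<forall>\<^sub>F n in sequentially. prob (V n) < d / 2"
    unfolding V_def using v_indep v_ident v_bnd c C ep d
    by (intro eventually_prob_max_partial_sum_deviation_less[where Y="\<lambda>_. v"]) auto
  have W_small: "prob (W n) \<le> d / 2" if n: "n > 0" for n
  proof -
    have "prob (W n) \<le> real (C * n) * ec / (ep / 3 * real n)"
      unfolding W_def using u_int v_int ep n rest_exp
      by (intro prob_partial_sum_ge_le) (auto simp: v_def)
    also have "\<dots> = real C * ec * 3 / ep" using n ep by (simp add: field_simps)
    also have "\<dots> \<le> d / 2" using ec(3) ep by (simp add: field_simps)
    finally show ?thesis .
  qed
  show ?thesis
    using V_small eventually_gt_at_top[of 0]
  proof eventually_elim
    case (elim n)
    have "prob (V n \<union> W n) \<le> d"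
      using measure_Un_le[of "V n" M "W n"] V_W_sets elim W_small[of n] by auto
    moreover have "\<bar>(\<Sum>i<m. u i w) - real m * expectation (u 0)\<bar> \<le> ep * real n"
      if w: "w \<in> space M - (V n \<union> W n)" and m: "m \<le> C * n" for w m
    proof -
      have "real m * ec \<le> real n * (real C * ec)"
        using m ec(1) mult_right_mono[of "real m" "real n * real C" ec]
        by (simp flip: of_nat_mult add: mult.commute mult.left_commute)
      also have "\<dots> \<le> ep / 3 * real n"
        using mult_left_mono[OF ec(2), of "real n"] by (simp add: mult.commute)
      finally have m_ec: "real m * ec \<le> ep / 3 * real n" .
      have "\<bar>(\<Sum>i<m. v i w) - real m * expectation (v 0)\<bar> < ep / 3 * real n"
        using w m unfolding V_def by (auto simp: not_le) (meson not_le)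
      moreover have "(\<Sum>i<C * n. u i w - v i w) < ep / 3 * real n"
        using w unfolding W_def by auto
      ultimately have "\<bar>(\<Sum>i<m. u i w) - real m * (expectation (v 0) + ec)\<bar> \<le> 3 * (ep / 3 * real n)"
        by (intro partial_sum_deviation_truncation[OF _ m ec(1) m_ec]) (auto simp: v_def)
      then show ?thesis unfolding ec_def by simp
    qed
    ultimately show ?case using V_W_sets by blast
  qed
qed

lemma Collect_of_nat_le_eq_atLeastAtMost:
  "{m::nat. 1 \<le> m \<and> real m \<le> r} = {1..nat \<lfloor>r\<rfloor>}"
proof (intro set_eqI iffI)
  fix m assume "m \<in> {m::nat. 1 \<le> m \<and> real m \<le> r}"
  then show "m \<in> {1..nat \<lfloor>r\<rfloor>}" by (auto simp: le_nat_iff le_floor_iff)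
next
  fix m assume "m \<in> {1..nat \<lfloor>r\<rfloor>}"
  then have "1 \<le> m" "int m \<le> \<lfloor>r\<rfloor>" by auto
  then show "m \<in> {m::nat. 1 \<le> m \<and> real m \<le> r}" by (simp add: le_floor_iff)
qed

lemma partial_sum_le_imp_less:
  fixes u :: "nat \<Rightarrow> real"
  assumes u: "\<And>i. u i \<ge> 0" and m: "(\<Sum>i<m. u i) \<le> x" and N: "x < (\<Sum>i<N. u i)"
  shows "m < N"
proof (rule ccontr)
  assume "\<not> m < N"
  then have "(\<Sum>i<N. u i) \<le> (\<Sum>i<m. u i)" using u by (intro sum_mono2) auto
  then show False using m N by linarith
qed

lemma renewal_count_le:
  fixes u :: "nat \<Rightarrow> real" and N :: nat
  assumes u: "\<And>i. u i \<ge> 0" and lam: "lam > 0" and x: "0 \<le> x + \<delta>"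
    and horizon: "x < (\<Sum>i<N. u i)"
    and close: "\<forall>m\<le>N. real m / lam - \<delta> \<le> (\<Sum>i<m. u i)"
  shows "real (renewal_count u x) \<le> lam * (x + \<delta>)"
proof -
  define A where "A = {m. 1 \<le> m \<and> (\<Sum>i<m. u i) \<le> x}"
  have "A \<subseteq> {m. 1 \<le> m \<and> real m \<le> lam * (x + \<delta>)}"
  proof safe
    fix m assume m: "m \<in> A"
    then have "m \<le> N"
      using partial_sum_le_imp_less[OF u _ horizon] by (auto simp: A_def less_imp_le)
    then have "real m / lam \<le> x + \<delta>" using close m by (force simp: A_def)
    then show "real m \<le> lam * (x + \<delta>)" using lam by (simp add: field_simps)
  qed (simp add: A_def)
  then have "A \<subseteq> {1..nat \<lfloor>lam * (x + \<delta>)\<rfloor>}"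
    unfolding Collect_of_nat_le_eq_atLeastAtMost .
  then have "card A \<le> card {1..nat \<lfloor>lam * (x + \<delta>)\<rfloor>}" by (intro card_mono) auto
  then have "real (card A) \<le> real (nat \<lfloor>lam * (x + \<delta>)\<rfloor>)" by simp
  also have "\<dots> \<le> lam * (x + \<delta>)" using lam x by simp
  finally show ?thesis unfolding renewal_count_def A_def .
qed

lemma renewal_count_ge:
  fixes u :: "nat \<Rightarrow> real" and N :: nat
  assumes u: "\<And>i. u i \<ge> 0" and lam: "lam > 0"
    and horizon: "x < (\<Sum>i<N. u i)" and within: "lam * (x - \<delta>) \<le> real N"
    and close: "\<forall>m\<le>N. (\<Sum>i<m. u i) \<le> real m / lam + \<delta>"
  shows "lam * (x - \<delta>) - 1 \<le> real (renewal_count u x)"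
proof -
  define A where "A = {m. 1 \<le> m \<and> (\<Sum>i<m. u i) \<le> x}"
  have "A \<subseteq> {..<N}"
    using partial_sum_le_imp_less[OF u _ horizon] by (auto simp: A_def)
  then have "finite A" by (rule finite_subset) simp
  have "{1..nat \<lfloor>lam * (x - \<delta>)\<rfloor>} \<subseteq> A"
  proof
    fix m assume "m \<in> {1..nat \<lfloor>lam * (x - \<delta>)\<rfloor>}"
    then have m: "1 \<le> m" "real m \<le> lam * (x - \<delta>)"
      unfolding Collect_of_nat_le_eq_atLeastAtMost[symmetric] by auto
    then have "m \<le> N" using within by linarith
    then have "(\<Sum>i<m. u i) \<le> real m / lam + \<delta>" using close by blast
    also have "real m / lam \<le> x - \<delta>" using m lam by (simp add: field_simps)
    finally show "m \<in> A" using m unfolding A_def by auto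
  qed
  then have "card {1..nat \<lfloor>lam * (x - \<delta>)\<rfloor>} \<le> card A" by (rule card_mono[OF \<open>finite A\<close>])
  then have "real (nat \<lfloor>lam * (x - \<delta>)\<rfloor>) \<le> real (card A)" by simp
  then show ?thesis unfolding renewal_count_def A_def[symmetric] by linarith
qed

text \<open>The horizon C is chosen with C > \<lambda>(T + 1), so that the partial sums up to Cn exceed nT.\<close>

lemma renewal_count_scaled_close:
  fixes u :: "nat \<Rightarrow> real" and C n :: nat
  assumes u: "\<And>i. u i \<ge> 0" and lam: "lam > 0" and t: "0 \<le> t" "t \<le> T"
    and ep: "0 < ep" "ep \<le> 1" and C: "real C > lam * (T + 1)" and n: "n > 0"
    and close: "\<forall>m\<le>C * n. \<bar>(\<Sum>i<m. u i) - real m / lam\<bar> \<le> ep * real n"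
  shows "real (renewal_count u (real n * t)) \<le> real C * real n"
    and "\<bar>real (renewal_count u (real n * t)) / real n - lam * t\<bar> \<le> lam * ep + 1 / real n"
proof -
  define N where "N = renewal_count u (real n * t)"
  have nt: "real n * t \<le> real n * T" using t by (simp add: mult_left_mono)
  have n_ep: "ep * real n \<le> real n" using mult_right_mono[of ep 1 "real n"] ep by simp
  have n_T1: "real n * (T + 1) = real n * T + real n" by (simp add: algebra_simps)
  have "real C / lam > T + 1" using C lam by (simp add: field_simps)
  then have "real n * (T + 1) < real n * (real C / lam)" using n by (intro mult_strict_left_mono) auto
  then have "real n * (T + 1) < real (C * n) / lam" by (simp add: mult.commute)
  then have horizon: "real n * t < (\<Sum>i<C * n. u i)"
    using close[rule_format, of "C * n"] nt n_ep n_T1 unfolding abs_le_iff by linarith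
  have "real n * t + ep * real n \<le> real n * (T + 1)" using nt n_ep n_T1 by linarith
  then have "lam * (real n * t + ep * real n) \<le> lam * (real n * (T + 1))"
    using lam by (intro mult_left_mono) auto
  also have "\<dots> = real n * (lam * (T + 1))" by simp
  also have "\<dots> \<le> real n * real C" using C by (intro mult_left_mono) auto
  also have "\<dots> = real (C * n)" by simp
  finally have within: "lam * (real n * t + ep * real n) \<le> real (C * n)" .
  have close_lo: "\<forall>m\<le>C * n. real m / lam - ep * real n \<le> (\<Sum>i<m. u i)"
    and close_hi: "\<forall>m\<le>C * n. (\<Sum>i<m. u i) \<le> real m / lam + ep * real n"
    using close by (auto simp: abs_le_iff)
  have "0 \<le> real n * t + ep * real n" using t ep by simp
  then have N_hi: "real N \<le> lam * (real n * t + ep * real n)"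
    unfolding N_def by (rule renewal_count_le[OF u lam _ horizon close_lo])
  have "lam * (real n * t - ep * real n) \<le> lam * (real n * t + ep * real n)"
    using lam ep by (intro mult_left_mono) auto
  then have "lam * (real n * t - ep * real n) \<le> real (C * n)" using within by linarith
  then have N_lo: "lam * (real n * t - ep * real n) - 1 \<le> real N"
    unfolding N_def by (rule renewal_count_ge[OF u lam horizon _ close_hi])
  show "real N \<le> real C * real n" using order_trans[OF N_hi within] by simp
  have "lam * t - lam * ep - 1 / real n = (lam * (real n * t - ep * real n) - 1) / real n"
    using n by (simp add: field_simps)
  also have "\<dots> \<le> real N / real n" using N_lo n by (intro divide_right_mono) auto
  finally have lower: "lam * t - lam * ep - 1 / real n \<le> real N / real n" .
  have "real N / real n \<le> lam * (real n * t + ep * real n) / real n"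
    using N_hi n by (intro divide_right_mono) auto
  also have "\<dots> = lam * t + lam * ep" using n by (simp add: field_simps)
  finally show "\<bar>real N / real n - lam * t\<bar> \<le> lam * ep + 1 / real n"
    using lower divide_nonneg_nonneg[of 1 "real n"] unfolding abs_le_iff by (intro conjI; linarith)
qed

text \<open>The error splits as
  (1/n)(X_0 + ... + X_(N-1) - N p_n) + (N/n)(p_n - p) + p(N/n - \<lambda>t).\<close>

lemma sampled_average_close:
  fixes X :: "nat \<Rightarrow> real" and C N n :: nat
  assumes n: "n > 0" and N: "real N \<le> real C * real n" "\<bar>real N / real n - lam * t\<bar> \<le> \<eta>"
    and X_close: "\<forall>m\<le>C * n. \<bar>(\<Sum>i<m. X i) - real m * pn\<bar> \<le> \<epsilon> * real n"
    and p: "0 \<le> p" "p \<le> 1" and pn: "\<bar>pn - p\<bar> * real C \<le> \<epsilon>"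
  shows "\<bar>(1 / real n) * (\<Sum>i<N. X i) - lam * t * p\<bar> \<le> 2 * \<epsilon> + \<eta>"
proof -
  have "N \<le> C * n" using N(1) by (simp flip: of_nat_mult)
  then have "\<bar>(\<Sum>i<N. X i) - real N * pn\<bar> \<le> \<epsilon> * real n" using X_close by blast
  then have sum_err: "\<bar>(1 / real n) * ((\<Sum>i<N. X i) - real N * pn)\<bar> \<le> \<epsilon>"
    using n by (simp add: abs_mult divide_le_eq mult.commute)
  have "real N / real n \<le> real C" using N(1) n by (simp add: divide_le_eq)
  then have "\<bar>(real N / real n) * (pn - p)\<bar> \<le> real C * \<bar>pn - p\<bar>"
    unfolding abs_mult by (simp add: mult_right_mono del: times_divide_eq_left)
  then have p_err: "\<bar>(real N / real n) * (pn - p)\<bar> \<le> \<epsilon>" using pn by (simp add: mult.commute)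
  have count_err: "\<bar>p * (real N / real n - lam * t)\<bar> \<le> \<eta>"
    using p N(2) mult_mono[of p 1 "\<bar>real N / real n - lam * t\<bar>" \<eta>] by (simp add: abs_mult)
  have "(1 / real n) * (\<Sum>i<N. X i) - lam * t * p =
      (1 / real n) * ((\<Sum>i<N. X i) - real N * pn) + (real N / real n) * (pn - p)
      + p * (real N / real n - lam * t)"
    using n by (simp add: field_simps)
  then show ?thesis using sum_err p_err count_err unfolding abs_le_iff by linarith
qed

lemma renewal_sampled_increment_close:
  fixes u X :: "nat \<Rightarrow> real" and C n :: nat
  assumes u: "\<And>i. u i \<ge> 0" and lam: "lam > 0" and st: "0 \<le> s" "s \<le> t" "t \<le> T"
    and ep: "0 < ep" "ep \<le> 1" "lam * ep \<le> e / 8"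
    and C: "real C > lam * (T + 1)" and n: "n > 0" "1 / real n \<le> e / 8"
    and u_close: "\<forall>m\<le>C * n. \<bar>(\<Sum>i<m. u i) - real m / lam\<bar> \<le> ep * real n"
    and X_close: "\<forall>m\<le>C * n. \<bar>(\<Sum>i<m. X i) - real m * pn\<bar> \<le> e / 8 * real n"
    and p: "0 \<le> p" "p \<le> 1" and pn: "\<bar>pn - p\<bar> * real C \<le> e / 8"
  shows "\<bar>((1 / real n) * (\<Sum>i<renewal_count u (real n * t). X i)
          - (1 / real n) * (\<Sum>i<renewal_count u (real n * s). X i))
         - (lam * t - lam * s) * p\<bar> \<le> e"
proof -
  have endpoint: "\<bar>(1 / real n) * (\<Sum>i<renewal_count u (real n * r). X i) - lam * r * p\<bar> \<le> e / 2"
    if r: "0 \<le> r" "r \<le> T" for r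
  proof -
    note N = renewal_count_scaled_close[OF u lam r ep(1,2) C n(1) u_close]
    have "\<bar>(1 / real n) * (\<Sum>i<renewal_count u (real n * r). X i) - lam * r * p\<bar>
        \<le> 2 * (e / 8) + (lam * ep + 1 / real n)"
      by (rule sampled_average_close[OF n(1) N X_close p pn])
    then show ?thesis using ep(3) n(2) by linarith
  qed
  have "\<bar>(1 / real n) * (\<Sum>i<renewal_count u (real n * t). X i) - lam * t * p\<bar> \<le> e / 2"
    by (rule endpoint) (use st in auto)
  moreover have "\<bar>(1 / real n) * (\<Sum>i<renewal_count u (real n * s). X i) - lam * s * p\<bar> \<le> e / 2"
    by (rule endpoint) (use st in auto)
  moreover have "(lam * t - lam * s) * p = lam * t * p - lam * s * p" by (simp add: algebra_simps)
  ultimately show ?thesis unfolding abs_le_iff by linarith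
qed

lemma (in prob_space) eventually_renewal_sampled_sums_close:
  fixes u :: "nat \<Rightarrow> 'a \<Rightarrow> real" and X :: "nat \<Rightarrow> nat \<Rightarrow> 'a \<Rightarrow> real"
  assumes u_indep: "indep_vars (\<lambda>_. borel) u UNIV"
    and u_ident: "\<And>i. distr M borel (u i) = distr M borel (u 0)"
    and u_nonneg: "\<And>i w. w \<in> space M \<Longrightarrow> 0 \<le> u i w"
    and u_int: "integrable M (u 0)" and u_mean: "expectation (u 0) = 1 / lam" and lam: "lam > 0"
    and X_indep: "\<And>n. indep_vars (\<lambda>_. borel) (X n) UNIV"
    and X_ident: "\<And>n i. distr M borel (X n i) = distr M borel (X n 0)"
    and X_bnd: "\<And>n i w. w \<in> space M \<Longrightarrow> X n i w \<in> {0..1}"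
    and X_lim: "(\<lambda>n. expectation (X n 0)) \<longlonglongrightarrow> p"
    and p: "0 \<le> p" "p \<le> 1" and T: "T > 0" and e: "e > 0" and d: "d > 0"
  shows "\<forall>\<^sub>F n in sequentially. \<exists>B\<in>events. prob B \<le> d \<and>
     (\<forall>w\<in>space M - B. \<forall>s t. 0 \<le> s \<longrightarrow> s \<le> t \<longrightarrow> t \<le> T \<longrightarrow>
        \<bar>((1 / real n) * (\<Sum>i<renewal_count (\<lambda>i. u i w) (real n * t). X n i w)
          - (1 / real n) * (\<Sum>i<renewal_count (\<lambda>i. u i w) (real n * s). X n i w))
         - (lam * t - lam * s) * p\<bar> \<le> e)"
proof -
  have [measurable]: "X n i \<in> borel_measurable M" for n i
    using X_indep[of n] unfolding indep_vars_def by auto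
  define ep where "ep = min 1 (e / (8 * lam))"
  have ep: "0 < ep" "ep \<le> 1" "lam * ep \<le> e / 8"
    using e lam unfolding ep_def by (auto simp: min_def field_simps)
  define C where "C = nat \<lceil>lam * (T + 1)\<rceil> + 1"
  have C: "real C > lam * (T + 1)" "C > 0" unfolding C_def by linarith+
  define H where "H n = {w\<in>space M. \<exists>m\<le>C * n.
                   e / 8 * real n \<le> \<bar>(\<Sum>i<m. X n i w) - real m * expectation (X n 0)\<bar>}" for n
  have H_sets: "H n \<in> events" for n unfolding H_def by measurable
  have "\<forall>\<^sub>F n in sequentially. \<exists>B\<in>events. prob B \<le> d / 2 \<and>
           (\<forall>w\<in>space M - B. \<forall>m\<le>C * n. \<bar>(\<Sum>i<m. u i w) - real m / lam\<bar> \<le> ep * real n)"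
    using eventually_uniform_partial_sums_close[OF u_indep u_ident u_nonneg u_int C(2) ep(1), of "d / 2"]
    by (simp add: u_mean d)
  moreover have "\<forall>\<^sub>F n in sequentially. prob (H n) < d / 2"
    unfolding H_def using C e d
    by (intro eventually_prob_max_partial_sum_deviation_less[OF X_indep X_ident X_bnd]) auto
  moreover have "\<forall>\<^sub>F n in sequentially. \<bar>expectation (X n 0) - p\<bar> * real C \<le> e / 8"
  proof -
    have "\<forall>\<^sub>F n in sequentially. dist (expectation (X n 0)) p < e / (8 * real C)"
      using X_lim e C by (intro tendstoD) auto
    then show ?thesis by eventually_elim (use C in \<open>simp add: dist_real_def field_simps\<close>)
  qed
  moreover have "\<forall>\<^sub>F n in sequentially. 1 / real n \<le> e / 8"
    using order_tendstoD(2)[OF lim_const_over_n[of 1], of "e / 8"] e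
    by (auto elim: eventually_mono)
  ultimately show ?thesis
    using eventually_gt_at_top[of 0]
  proof eventually_elim
    case (elim n)
    then obtain B1 where B1: "B1 \<in> events" "prob B1 \<le> d / 2"
      "\<forall>w\<in>space M - B1. \<forall>m\<le>C * n. \<bar>(\<Sum>i<m. u i w) - real m / lam\<bar> \<le> ep * real n" by blast
    have X_close: "\<forall>m\<le>C * n. \<bar>(\<Sum>i<m. X n i w) - real m * expectation (X n 0)\<bar> \<le> e / 8 * real n"
      if "w \<in> space M - H n" for w
    proof (intro allI impI)
      fix m assume "m \<le> C * n"
      then have "\<not> e / 8 * real n \<le> \<bar>(\<Sum>i<m. X n i w) - real m * expectation (X n 0)\<bar>"
        using that unfolding H_def by blast
      then show "\<bar>(\<Sum>i<m. X n i w) - real m * expectation (X n 0)\<bar> \<le> e / 8 * real n" by simp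
    qed
    show ?case
    proof (intro bexI[of _ "B1 \<union> H n"] conjI ballI allI impI)
      show "prob (B1 \<union> H n) \<le> d"
        using measure_Un_le[of B1 M "H n"] B1 H_sets elim by auto
      fix w s t assume w: "w \<in> space M - (B1 \<union> H n)" and st: "0 \<le> s" "s \<le> t" "t \<le> T"
      show "\<bar>((1 / real n) * (\<Sum>i<renewal_count (\<lambda>i. u i w) (real n * t). X n i w)
          - (1 / real n) * (\<Sum>i<renewal_count (\<lambda>i. u i w) (real n * s). X n i w))
         - (lam * t - lam * s) * p\<bar> \<le> e"
        using w B1 elim u_nonneg p X_close[of w]
        by (intro renewal_sampled_increment_close[OF _ lam st ep C(1)]) auto
    qed (use B1 H_sets in auto)
  qed
qed

lemma weak_conv_interval_measure:
  fixes \<mu> :: "nat \<Rightarrow> real measure"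
  assumes \<mu>: "\<And>n. real_distribution (\<mu> n)" and \<nu>: "real_distribution \<nu>"
    and conv: "weak_conv_m \<mu> \<nu>" and no_atoms: "\<And>x. measure \<nu> {x} = 0"
  shows "(\<lambda>n. measure (\<mu> n) {a<..<b}) \<longlonglongrightarrow> measure \<nu> {a<..<b}"
proof (rule weak_conv_imp_continuity_set_conv[OF \<mu> \<nu> conv])
  interpret \<nu>: real_distribution \<nu> by (rule \<nu>)
  have "frontier {a<..<b} \<subseteq> {a, b}"
    unfolding frontier_def using closure_greaterThanLessThan[of a b] closure_empty
    by (cases "a < b") auto
  moreover have "measure \<nu> {a, b} = 0"
    using \<nu>.finite_measure_eq_sum_singleton[of "{a, b}"] no_atoms by simp
  ultimately show "emeasure \<nu> (frontier {a<..<b}) = 0"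
    using \<nu>.emeasure_eq_measure \<nu>.finite_measure_mono[of "frontier {a<..<b}" "{a, b}"]
    by (simp add: measure_nonneg order_antisym)
qed auto

lemma (in prob_space) indep_vars_reindex:
  assumes indep: "indep_vars M' X (f ` J)" and inj: "inj_on f J"
  shows "indep_vars (\<lambda>j. M' (f j)) (\<lambda>j. X (f j)) J"
proof -
  define F where "F i = {X i -` A \<inter> space M | A. A \<in> sets (M' i)}" for i
  have rv: "\<forall>i\<in>f ` J. random_variable (M' i) (X i)"
    and ev: "\<forall>i\<in>f ` J. F i \<subseteq> events"
    and prod: "\<And>J'. J' \<subseteq> f ` J \<Longrightarrow> J' \<noteq> {} \<Longrightarrow> finite J' \<Longrightarrow>
      (\<forall>A\<in>Pi J' F. prob (\<Inter>j\<in>J'. A j) = (\<Prod>j\<in>J'. prob (A j)))"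
    using indep unfolding indep_vars_def2 indep_sets_def F_def by auto
  show ?thesis
    unfolding indep_vars_def2
  proof (intro conjI)
    show "\<forall>j\<in>J. random_variable (M' (f j)) (X (f j))" using rv by auto
    show "indep_sets (\<lambda>j. {X (f j) -` A \<inter> space M | A. A \<in> sets (M' (f j))}) J"
      unfolding indep_sets_def F_def[symmetric]
    proof (intro conjI ballI allI impI)
      fix j assume "j \<in> J" then show "F (f j) \<subseteq> events" using ev by auto
    next
      fix J' A assume J': "J' \<subseteq> J" "J' \<noteq> {}" "finite J'" and A: "A \<in> Pi J' (\<lambda>j. F (f j))"
      have inj': "inj_on f J'" using inj J'(1) by (rule inj_on_subset)
      define A' where "A' i = A (the_inv_into J' f i)" for i
      have A'f: "A' (f j) = A j" if "j \<in> J'" for j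
        unfolding A'_def using the_inv_into_f_f[OF inj' that] by simp
      have "A' \<in> Pi (f ` J') F" using A by (auto simp: A'f)
      then have "prob (\<Inter>i\<in>f ` J'. A' i) = (\<Prod>i\<in>f ` J'. prob (A' i))"
        using prod[of "f ` J'"] J' by auto
      then show "prob (\<Inter>j\<in>J'. A j) = (\<Prod>j\<in>J'. prob (A j))"
        using A'f by (simp add: prod.reindex[OF inj'])
    qed
  qed
qed

lemma (in prob_space) indep_vars_section:
  assumes indep: "indep_vars (\<lambda>_. N) (\<lambda>p. X (fst p) (snd p)) (I \<times> J)" and k: "k \<in> I"
  shows "indep_vars (\<lambda>_. N) (X k) J"
proof -
  have "indep_vars (\<lambda>_. N) (\<lambda>p. X (fst p) (snd p)) (Pair k ` J)"
    using k by (intro indep_vars_subset[OF indep]) auto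
  from indep_vars_reindex[OF this] show ?thesis by (simp add: inj_on_def)
qed

lemma measurable_deltap[measurable]:
  assumes [measurable]: "A \<in> sets borel"
  shows "(\<lambda>x. deltap x A) \<in> borel_measurable borel"
proof -
  have "(\<lambda>x. deltap x A) = indicator ({0<..} \<inter> A)"
    by (auto simp: deltap_def indicator_def fun_eq_iff)
  then show ?thesis by simp
qed

lemma measurable_Gbar_renewal_count[measurable]:
  assumes [measurable]: "\<And>i. g i \<in> borel_measurable M" "\<And>i. u i \<in> borel_measurable M"
    and [measurable]: "A \<in> sets borel"
  shows "(\<lambda>w. Gbar n (\<lambda>i. g i w) (renewal_count (\<lambda>i. u i w) x) A) \<in> borel_measurable M"
proof -
  have count: "(\<lambda>w. renewal_count (\<lambda>i. u i w) x) \<in> M \<rightarrow>\<^sub>M count_space UNIV"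
    unfolding renewal_count_def by measurable
  show ?thesis
    unfolding Gbar_def
    by (rule measurable_compose_countable'[where f="\<lambda>m w. 1 / real n * (\<Sum>i<m. deltap (g i w) A)"
          and I=UNIV, OF _ count]) auto
qed

lemma sets_Gbar_renewal_increment_bound:
  assumes [measurable]: "\<And>i. g i \<in> borel_measurable M" "\<And>i. u i \<in> borel_measurable M"
    and [measurable]: "A \<in> sets borel" and u: "\<And>i w. w \<in> space M \<Longrightarrow> 0 \<le> u i w"
  shows "{w\<in>space M. \<forall>s t. 0 \<le> s \<longrightarrow> s \<le> t \<longrightarrow> t \<le> T \<longrightarrow>
           \<bar>(Gbar n (\<lambda>i. g i w) (renewal_count (\<lambda>i. u i w) (real n * t)) A
             - Gbar n (\<lambda>i. g i w) (renewal_count (\<lambda>i. u i w) (real n * s)) A)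
            - (l * t - l * s) * p\<bar> \<le> e} \<in> sets M"
proof (rule sets_Collect_increment_bound)
  fix w assume "w \<in> space M"
  then have "right_locally_const (\<lambda>t. renewal_count (\<lambda>i. u i w) (real n * t))"
    using u by (intro right_locally_const_scale right_locally_const_renewal_count) auto
  then show "right_locally_const
      (\<lambda>t. Gbar n (\<lambda>i. g i w) (renewal_count (\<lambda>i. u i w) (real n * t)) A)"
    by (rule right_locally_const_comp)
qed measurable

lemma (in prob_space) eventually_Gbar_renewal_close:
  fixes u :: "nat \<Rightarrow> 'a \<Rightarrow> real" and g :: "nat \<Rightarrow> nat \<Rightarrow> 'a \<Rightarrow> real"
  assumes u_indep: "indep_vars (\<lambda>_. borel) u UNIV"
    and u_ident: "\<And>i. distr M borel (u i) = distr M borel (u 0)"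
    and u_nonneg: "\<And>i w. w \<in> space M \<Longrightarrow> 0 \<le> u i w"
    and u_int: "integrable M (u 0)" and u_mean: "expectation (u 0) = 1 / lam" and lam: "lam > 0"
    and g_indep: "\<And>n. indep_vars (\<lambda>_. borel) (g n) UNIV"
    and g_distr: "\<And>n i. distr M borel (g n i) = G n"
    and conv: "weak_conv_m G \<Gamma>" and \<Gamma>: "real_distribution \<Gamma>" "\<And>x. measure \<Gamma> {x} = 0"
    and a: "0 \<le> a" and T: "T > 0" and e: "e > 0" and d: "d > 0"
  shows "\<forall>\<^sub>F n in sequentially. \<exists>B\<in>events. prob B \<le> d \<and>
     (\<forall>w\<in>space M - B. \<forall>s t. 0 \<le> s \<longrightarrow> s \<le> t \<longrightarrow> t \<le> T \<longrightarrow>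
        \<bar>(Gbar n (\<lambda>i. g n i w) (renewal_count (\<lambda>i. u i w) (real n * t)) {a<..<b}
          - Gbar n (\<lambda>i. g n i w) (renewal_count (\<lambda>i. u i w) (real n * s)) {a<..<b})
         - (lam * t - lam * s) * measure \<Gamma> {a<..<b}\<bar> \<le> e)"
proof -
  have [measurable]: "g n i \<in> borel_measurable M" for n i
    using g_indep[of n] unfolding indep_vars_def by auto
  have deltap: "deltap x {a<..<b} = indicator {a<..<b} x" for x
    using a by (simp add: deltap_def indicator_def) \<comment> \<open>positivity is implied by x > a \<ge> 0\<close>
  have G: "real_distribution (G n)" for n
    using g_distr[of n 0, symmetric] unfolding real_distribution_def real_distribution_axioms_def
    by (auto intro!: prob_space_distr)
  have "expectation (\<lambda>w. deltap (g n 0 w) {a<..<b}) = measure (G n) {a<..<b}" for n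
  proof -
    have "expectation (\<lambda>w. deltap (g n 0 w) {a<..<b}) = expectation (\<lambda>w. indicator {a<..<b} (g n 0 w))"
      by (simp add: deltap)
    also have "\<dots> = integral\<^sup>L (distr M borel (g n 0)) (indicator {a<..<b})"
      by (rule integral_distr[symmetric]) auto
    also have "\<dots> = measure (G n) {a<..<b}" by (simp add: g_distr[of n 0, symmetric])
    finally show ?thesis .
  qed
  then have lim: "(\<lambda>n. expectation (\<lambda>w. deltap (g n 0 w) {a<..<b})) \<longlonglongrightarrow> measure \<Gamma> {a<..<b}"
    using weak_conv_interval_measure[OF G \<Gamma>(1) conv \<Gamma>(2)] by simp
  interpret \<Gamma>: real_distribution \<Gamma> by (rule \<Gamma>(1))
  have X_indep: "indep_vars (\<lambda>_. borel) (\<lambda>i w. deltap (g n i w) {a<..<b}) UNIV" for n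
    by (rule indep_vars_compose2[OF g_indep]) measurable
  have X_ident: "distr M borel (\<lambda>w. deltap (g n i w) {a<..<b}) = distr M borel (\<lambda>w. deltap (g n 0 w) {a<..<b})"
    for n i by (rule distr_compose_eq[where f="\<lambda>x. deltap x {a<..<b}"]) (simp_all add: g_distr)
  have X_bnd: "deltap (g n i w) {a<..<b} \<in> {0..1}" for n i w
    by (simp add: deltap_def)
  have "measure \<Gamma> {a<..<b} \<le> 1" by simp
  then show ?thesis
    unfolding Gbar_def
    using eventually_renewal_sampled_sums_close[OF u_indep u_ident u_nonneg u_int u_mean lam
          X_indep X_ident X_bnd lim _ _ T e d] by simp
qed

lemma (in prob_space) liminf_prob_Collect_finite_All_ge:
  assumes I: "finite I" and sets: "\<And>n. {w\<in>space M. \<forall>k\<in>I. P n k w} \<in> events"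
    and small: "\<And>k. k \<in> I \<Longrightarrow> \<forall>\<^sub>F n in sequentially.
                  \<exists>B\<in>events. prob B \<le> d \<and> (\<forall>w\<in>space M - B. P n k w)"
    and d: "real (card I) * d \<le> \<eta>"
  shows "ereal (1 - \<eta>) \<le> liminf (\<lambda>n. ereal (prob {w\<in>space M. \<forall>k\<in>I. P n k w}))"
proof (rule Liminf_bounded)
  have "\<forall>\<^sub>F n in sequentially. \<forall>k\<in>I. \<exists>B\<in>events. prob B \<le> d \<and> (\<forall>w\<in>space M - B. P n k w)"
    using I small by (intro eventually_ball_finite) auto
  then show "\<forall>\<^sub>F n in sequentially. ereal (1 - \<eta>) \<le> ereal (prob {w\<in>space M. \<forall>k\<in>I. P n k w})"
  proof eventually_elim
    case (elim n)
    then obtain B where B: "\<And>k. k \<in> I \<Longrightarrow> B k \<in> events \<and> prob (B k) \<le> d \<and>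
        (\<forall>w\<in>space M - B k. P n k w)" by metis
    have "prob (\<Union>k\<in>I. B k) \<le> (\<Sum>k\<in>I. prob (B k))"
      using B by (intro measure_UNION_le I) auto
    also have "\<dots> \<le> \<eta>" using B sum_mono[of I "\<lambda>k. prob (B k)" "\<lambda>_. d"] d by auto
    finally have union_small: "prob (\<Union>k\<in>I. B k) \<le> \<eta>" .
    have union_ev: "(\<Union>k\<in>I. B k) \<in> events" using B I by auto
    have "1 - \<eta> \<le> prob (space M - (\<Union>k\<in>I. B k))"
      using prob_compl[OF union_ev] union_small by simp
    also have "\<dots> \<le> prob {w\<in>space M. \<forall>k\<in>I. P n k w}"
      using B by (intro finite_measure_mono sets) auto
    finally show ?case by simp
  qed
qed

theorem corollary5p1:
  fixes M :: "'a measure" and K :: nat and lam :: "nat \<Rightarrow> real"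
    and u :: "nat \<Rightarrow> nat \<Rightarrow> 'a \<Rightarrow> real"
    and g :: "nat \<Rightarrow> nat \<Rightarrow> nat \<Rightarrow> 'a \<Rightarrow> real"
    and Gn :: "nat \<Rightarrow> nat \<Rightarrow> real measure" and Gam :: "nat \<Rightarrow> real measure"
    and T eps eta a b :: real
  assumes P: "prob_space M"
    and lam_pos: "\<forall>k\<in>{1..K}. lam k > 0"
    and u_meas: "\<forall>k\<in>{1..K}. \<forall>i. u k i \<in> borel_measurable M"
    and u_pos: "\<forall>k\<in>{1..K}. \<forall>i. \<forall>\<omega>\<in>space M. u k i \<omega> > 0"
    and u_indep: "\<forall>k\<in>{1..K}. prob_space.indep_vars M (\<lambda>_. borel) (u k) UNIV"
    and u_ident: "\<forall>k\<in>{1..K}. \<forall>i. distr M borel (u k i) = distr M borel (u k 0)"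
    and u_mean: "\<forall>k\<in>{1..K}. integrable M (u k 0) \<and> integral\<^sup>L M (u k 0) = 1 / lam k"
    and g_meas: "\<forall>n. \<forall>k\<in>{1..K}. \<forall>i. g n k i \<in> borel_measurable M"
    and g_pos: "\<forall>n. \<forall>k\<in>{1..K}. \<forall>i. \<forall>\<omega>\<in>space M. g n k i \<omega> > 0"
    and g_indep: "\<forall>n. prob_space.indep_vars M (\<lambda>_. borel) (\<lambda>p. g n (fst p) (snd p)) ({1..K} \<times> UNIV)"
    and g_distr: "\<forall>n. \<forall>k\<in>{1..K}. \<forall>i. distr M borel (g n k i) = Gn n k"
    and g_arr_indep: "\<forall>n. prob_space.indep_var M
        (PiM ({1..K} \<times> UNIV) (\<lambda>_. borel)) (\<lambda>\<omega>. \<lambda>p\<in>{1..K} \<times> UNIV. g n (fst p) (snd p) \<omega>)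
        (PiM ({1..K} \<times> UNIV) (\<lambda>_. borel)) (\<lambda>\<omega>. \<lambda>p\<in>{1..K} \<times> UNIV. u (fst p) (snd p) \<omega>)"
    and Gn_mean: "\<forall>n. \<forall>k\<in>{1..K}. integrable (Gn n k) (\<lambda>x. x)"
    and Gn_UI: "\<forall>k\<in>{1..K}.
        ((\<lambda>m::real. SUP n. ereal (set_lebesgue_integral (Gn n k) {m<..} (\<lambda>x. x))) \<longlongrightarrow> (0::ereal)) at_top"
    and Gn_weak: "\<forall>k\<in>{1..K}. weak_conv_m (\<lambda>n. Gn n k) (Gam k)"
    and Gam: "\<forall>k\<in>{1..K}. prob_space (Gam k) \<and> sets (Gam k) = sets borel
        \<and> measure (Gam k) {..0} = 0 \<and> (\<forall>x. measure (Gam k) {x} = 0)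
        \<and> integrable (Gam k) (\<lambda>x. x)"
    and T_pos: "T > 0" and eps_pos: "eps > 0" and eta_pos: "eta > 0"
    and ab: "0 \<le> a" "a \<le> b"
  shows "liminf (\<lambda>n. ereal (measure M {\<omega>\<in>space M. \<forall>k\<in>{1..K}. \<forall>s t. 0 \<le> s \<longrightarrow> s \<le> t \<longrightarrow> t \<le> T \<longrightarrow>
            \<bar>(Gbar n (\<lambda>i. g n k i \<omega>) (renewal_count (\<lambda>i. u k i \<omega>) (real n * t)) {a<..<b}
              - Gbar n (\<lambda>i. g n k i \<omega>) (renewal_count (\<lambda>i. u k i \<omega>) (real n * s)) {a<..<b})
             - (lam k * t - lam k * s) * measure (Gam k) {a<..<b}\<bar> \<le> eps}))
         \<ge> ereal (1 - eta)"
proof -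
  interpret prob_space M by (rule P)
  define Q where "Q n k w \<longleftrightarrow> (\<forall>s t. 0 \<le> s \<longrightarrow> s \<le> t \<longrightarrow> t \<le> T \<longrightarrow>
      \<bar>(Gbar n (\<lambda>i. g n k i w) (renewal_count (\<lambda>i. u k i w) (real n * t)) {a<..<b}
        - Gbar n (\<lambda>i. g n k i w) (renewal_count (\<lambda>i. u k i w) (real n * s)) {a<..<b})
       - (lam k * t - lam k * s) * measure (Gam k) {a<..<b}\<bar> \<le> eps)" for n k w
  have classwise: "\<forall>\<^sub>F n in sequentially. \<exists>B\<in>events. prob B \<le> eta / (real K + 1) \<and>
      (\<forall>w\<in>space M - B. Q n k w)" if k: "k \<in> {1..K}" for k
    unfolding Q_def
  proof (rule eventually_Gbar_renewal_close)
    show "indep_vars (\<lambda>_. borel) (u k) UNIV" using u_indep k by blast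
    show "distr M borel (u k i) = distr M borel (u k 0)" for i using u_ident k by blast
    show "0 \<le> u k i w" if "w \<in> space M" for i w using u_pos k that by (blast intro: less_imp_le)
    show "integrable M (u k 0)" "expectation (u k 0) = 1 / lam k" using u_mean k by auto
    show "lam k > 0" using lam_pos k by blast
    show "indep_vars (\<lambda>_. borel) (g n k) UNIV" for n
      using indep_vars_section[OF g_indep[rule_format] k] .
    show "distr M borel (g n k i) = Gn n k" for n i using g_distr k by blast
    show "weak_conv_m (\<lambda>n. Gn n k) (Gam k)" using Gn_weak k by blast
    show "real_distribution (Gam k)"
      using Gam k unfolding real_distribution_def real_distribution_axioms_def by auto
    show "measure (Gam k) {x} = 0" for x using Gam k by blast
  qed (use ab T_pos eps_pos eta_pos in auto)
  have events: "{w\<in>space M. \<forall>k\<in>{1..K}. Q n k w} \<in> events" for n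
  proof (rule sets.sets_Collect_finite_All)
    fix k assume k: "k \<in> {1..K}"
    show "{w\<in>space M. Q n k w} \<in> events"
      unfolding Q_def using g_meas u_meas u_pos k
      by (intro sets_Gbar_renewal_increment_bound) (auto intro: less_imp_le)
  qed simp
  have "ereal (1 - eta) \<le> liminf (\<lambda>n. ereal (prob {w\<in>space M. \<forall>k\<in>{1..K}. Q n k w}))"
    by (rule liminf_prob_Collect_finite_All_ge[OF _ events classwise]) (use eta_pos in \<open>auto simp: field_simps\<close>)
  then show ?thesis unfolding Q_def by simp
qed

end
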